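(* Let $d\ge3$, $h\ge1$. The exponent $\exp(d,h)$ of $G(d,h)$ divides $$(d-1)^h\cdot\operatorname{lcm}\{d\,\theta(d,h+1),\ \theta(d,h),\ \theta(d,h-1),\dots,\theta(d,2)\},$$ where $\theta(d,n):=\frac{(d-1)^n-1}{d-2}$.
   Context: Let $\mathcal{T}(d,h)$ be the rooted tree in which the root $0$ has $d$ children, every vertex at distance $1,\dots,h-1$ from the root has $d-1$ children, and the vertices at distance $h$ are leaves. Let $V$ be its vertex set, $A$ its adjacency matrix, $\Delta := dI-A$, and $\Lambda\subset\mathbb{Z}^V$ the lattice spanned by the rows of $\Delta$. Then $G(d,h):=\mathbb{Z}^V/\Lambda$. The exponent is the least common multiple of the orders of the elements. *)

theory Defs
  imports Main
begin

text \<open>Vertices of T(d,h): the root is the empty list; a vertex at depth k is the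
list of child indices along the path from the root.\<close>
definition tvert :: "nat \<Rightarrow> nat \<Rightarrow> nat list set" where
  "tvert d h = {xs. length xs \<le> h \<and>
      (\<forall>i<length xs. xs ! i < (if i = 0 then d else d - 1))}"

definition tadj :: "nat list \<Rightarrow> nat list \<Rightarrow> bool" where
  "tadj x y \<longleftrightarrow> (\<exists>c. y = x @ [c]) \<or> (\<exists>c. x = y @ [c])"

definition lap_row :: "nat \<Rightarrow> nat \<Rightarrow> nat list \<Rightarrow> nat list \<Rightarrow> int" where
  "lap_row d h v = (\<lambda>w. if w \<in> tvert d h then
      (if w = v then int d else if tadj v w then -1 else 0) else 0)"

text \<open>Z^V, realised as integer functions on vertex lists supported on V.\<close>
definition ZV :: "nat \<Rightarrow> nat \<Rightarrow> (nat list \<Rightarrow> int) set" where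
  "ZV d h = {f. \<forall>w. w \<notin> tvert d h \<longrightarrow> f w = 0}"

definition lap_lattice :: "nat \<Rightarrow> nat \<Rightarrow> (nat list \<Rightarrow> int) set" where
  "lap_lattice d h = {f. \<exists>c :: nat list \<Rightarrow> int.
      f = (\<lambda>w. \<Sum>v\<in>tvert d h. c v * lap_row d h v w)}"

text \<open>Order of the class of f in G(d,h) = Z^V / Lambda (0 if infinite order).\<close>
definition elem_order :: "nat \<Rightarrow> nat \<Rightarrow> (nat list \<Rightarrow> int) \<Rightarrow> nat" where
  "elem_order d h f =
     (if \<exists>k>0. (\<lambda>w. int k * f w) \<in> lap_lattice d h
      then LEAST k. k > 0 \<and> (\<lambda>w. int k * f w) \<in> lap_lattice d h else 0)"

definition group_exponent :: "nat \<Rightarrow> nat \<Rightarrow> nat" where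
  "group_exponent d h = Lcm (elem_order d h ` ZV d h)"

definition theta :: "nat \<Rightarrow> nat \<Rightarrow> nat" where
  "theta d n = ((d - 1) ^ n - 1) div (d - 2)"

end

(*
  Write e_u for the unit vector at a vertex u and R n = 1 + (d-1) + ... + (d-1)^(n-1), so that
  R n = theta(d,n) and d R(n+1) = R(n+2) + (d-1) R n.  For a vertex w let psi_w put R(h+1-|u|)
  on every vertex u of the subtree below w.  The recurrence makes Delta psi_w collapse to
  R(h+2-|w|) e_w - R(h+1-|w|) e_parent(w), and Delta psi_root = (R(h+2) - R h) e_root
  = d (d-1)^h e_root.  So c R(h+1-|w|) e_parent(w) in Lambda gives c R(h+2-|w|) e_w in Lambda.
  Walking from u to the root, M e_u lies in Lambda for
  M = (d-1)^h lcm {d R(h+1), R h, ..., R 2}: the divisibility conditions needed at each step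
  survive because consecutive R n are coprime.
*)
theory Submission
  imports Defs "HOL-Library.Sublist"
begin

fun repunit :: "int \<Rightarrow> nat \<Rightarrow> int" where
  "repunit b 0 = 0"
| "repunit b (Suc n) = b * repunit b n + 1"

lemma repunit_closed_form: "(b - 1) * repunit b n = b ^ n - 1"
  by (induction n) (simp_all add: algebra_simps)

lemma theta_eq_repunit:
  assumes "d \<ge> 3"
  shows "int (theta d n) = repunit (int d - 1) n"
proof -
  have "int (theta d n) = ((int d - 1) ^ n - 1) div (int d - 2)"
    using assms by (simp add: theta_def zdiv_int of_nat_diff)
  also have "\<dots> = repunit (int d - 1) n"
  proof -
    have "(int d - 1) ^ n - 1 = (int d - 2) * repunit (int d - 1) n"
      using repunit_closed_form[of "int d - 1" n] by simp
    moreover have "int d - 2 \<noteq> 0" using assms by simp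
    ultimately show ?thesis by simp
  qed
  finally show ?thesis .
qed

lemma repunit_pos: "b \<ge> 0 \<Longrightarrow> n > 0 \<Longrightarrow> repunit b n > 0"
proof (induction n)
  case (Suc n)
  then show ?case by (cases "n = 0") (simp_all add: add_pos_nonneg)
qed simp

lemma coprime_repunit_Suc: "coprime (repunit b (Suc n)) (repunit b n)"
proof (rule coprimeI)
  fix c assume "c dvd repunit b (Suc n)" "c dvd repunit b n"
  then have "c dvd repunit b (Suc n) - b * repunit b n" by (intro dvd_diff dvd_mult)
  also have "repunit b (Suc n) - b * repunit b n = 1" by simp
  finally show "is_unit c" .
qed

lemma repunit_Suc_Suc_diff: "repunit b (Suc (Suc n)) - repunit b n = (b + 1) * b ^ n"
  using repunit_closed_form[of b n] by (simp add: algebra_simps)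

lemma repunit_three_term: "(b + 1) * repunit b (Suc n) = repunit b (Suc (Suc n)) + b * repunit b n"
  by (simp add: algebra_simps)

declare repunit.simps(2) [simp del]

definition branching :: "nat \<Rightarrow> nat list \<Rightarrow> nat" where
  "branching d u = (if u = [] then d else d - 1)"

lemma snoc_in_tvert_iff:
  "u @ [x] \<in> tvert d h \<longleftrightarrow> u \<in> tvert d h \<and> length u < h \<and> x < branching d u"
  by (auto simp: tvert_def branching_def nth_append less_Suc_eq all_conj_distrib)

lemma butlast_in_tvert: "u \<in> tvert d h \<Longrightarrow> butlast u \<in> tvert d h"
  by (auto simp: tvert_def nth_butlast)

lemma Nil_in_tvert: "[] \<in> tvert d h"
  by (simp add: tvert_def)

lemma length_le_if_in_tvert: "u \<in> tvert d h \<Longrightarrow> length u \<le> h"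
  by (simp add: tvert_def)

lemma finite_tvert: "finite (tvert d h)"
proof (rule finite_subset)
  have "set xs \<subseteq> {..<d}" if "xs \<in> tvert d h" for xs
  proof
    fix x assume "x \<in> set xs"
    then obtain i where "i < length xs" "xs ! i = x" by (auto simp: in_set_conv_nth)
    then show "x \<in> {..<d}" using that by (auto simp: tvert_def split: if_splits)
  qed
  then show "tvert d h \<subseteq> {xs. set xs \<subseteq> {..<d} \<and> length xs \<le> h}"
    by (auto simp: length_le_if_in_tvert)
  show "finite {xs. set xs \<subseteq> {..<d} \<and> length xs \<le> h}"
    by (rule finite_lists_length_le) simp
qed

definition lap_comb :: "nat \<Rightarrow> nat \<Rightarrow> (nat list \<Rightarrow> int) \<Rightarrow> nat list \<Rightarrow> int" where
  "lap_comb d h c = (\<lambda>w. \<Sum>v\<in>tvert d h. c v * lap_row d h v w)"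

lemma lap_lattice_eq_range: "lap_lattice d h = range (lap_comb d h)"
  unfolding lap_lattice_def lap_comb_def by auto

lemma lap_comb_outside: "u \<notin> tvert d h \<Longrightarrow> lap_comb d h c u = 0"
  by (simp add: lap_comb_def lap_row_def)

lemma lap_comb_eq:
  assumes c: "c \<in> ZV d h" and u: "u \<in> tvert d h"
  shows "lap_comb d h c u = int d * c u - (if u = [] then 0 else c (butlast u))
           - (\<Sum>x<branching d u. c (u @ [x]))"
proof -
  define P where "P = (if u = [] then {} else {butlast u})"
  define C where "C = (\<lambda>x. u @ [x]) ` {..<branching d u}"
  have "lap_comb d h c u =
      (\<Sum>v\<in>tvert d h. (if v = u then int d * c v else 0) - (if tadj v u then c v else 0))"
    unfolding lap_comb_def lap_row_def using u by (intro sum.cong) (auto simp: tadj_def)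
  also have "\<dots> = int d * c u - (\<Sum>v\<in>{v \<in> tvert d h. tadj v u}. c v)"
    using u finite_tvert by (simp add: sum_subtractf sum.inter_filter)
  also have "(\<Sum>v\<in>{v \<in> tvert d h. tadj v u}. c v) = (\<Sum>v\<in>P \<union> C. c v)"
  proof (rule sum.mono_neutral_left)
    show "finite (P \<union> C)" by (simp add: P_def C_def)
    show "{v \<in> tvert d h. tadj v u} \<subseteq> P \<union> C"
      using snoc_in_tvert_iff[of u _ d h] by (auto simp: tadj_def P_def C_def)
    have "tadj v u" if "v \<in> P \<union> C" for v
      using that unfolding tadj_def P_def C_def
      by (auto split: if_splits intro: append_butlast_last_id[symmetric])
    then show "\<forall>v\<in>P \<union> C - {v \<in> tvert d h. tadj v u}. c v = 0"
      using c by (auto simp: ZV_def)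
  qed
  also have "\<dots> = (\<Sum>v\<in>P. c v) + (\<Sum>v\<in>C. c v)"
    by (rule sum.union_disjoint) (auto simp: P_def C_def dest: arg_cong[of _ _ length])
  also have "(\<Sum>v\<in>C. c v) = (\<Sum>x<branching d u. c (u @ [x]))"
    unfolding C_def by (simp add: sum.reindex inj_on_def)
  finally show ?thesis by (simp add: P_def)
qed

definition subtree_vec :: "nat \<Rightarrow> nat \<Rightarrow> nat list \<Rightarrow> nat list \<Rightarrow> int" where
  "subtree_vec d h w = (\<lambda>u. if u \<in> tvert d h \<and> prefix w u
      then repunit (int d - 1) (Suc (h - length u)) else 0)"

lemma subtree_vec_in_ZV: "subtree_vec d h w \<in> ZV d h"
  by (simp add: ZV_def subtree_vec_def)

lemma not_prefix_butlast: "u \<noteq> [] \<Longrightarrow> \<not> prefix u (butlast u)"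
  using prefix_length_le[of u "butlast u"] by (cases u rule: rev_cases) auto

lemma subtree_vec_butlast:
  assumes u: "u \<in> tvert d h" and wu: "prefix w u" "u \<noteq> w"
  shows "subtree_vec d h w (butlast u) = repunit (int d - 1) (Suc (Suc (h - length u)))"
proof -
  have "u \<noteq> []" using wu by auto
  then have "prefix w (butlast u @ [last u])" using wu by simp
  then have "w = butlast u @ [last u] \<or> prefix w (butlast u)" by (simp only: prefix_snoc)
  then have "prefix w (butlast u)" using wu \<open>u \<noteq> []\<close> by auto
  moreover have "h - length (butlast u) = Suc (h - length u)"
    using \<open>u \<noteq> []\<close> length_le_if_in_tvert[OF u] by (cases u) auto
  ultimately show ?thesis using butlast_in_tvert[OF u] by (simp add: subtree_vec_def)
qed

lemma subtree_vec_snoc: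
  assumes u: "u \<in> tvert d h" and wu: "prefix w u" and x: "x < branching d u"
  shows "subtree_vec d h w (u @ [x]) = repunit (int d - 1) (h - length u)"
proof (cases "length u < h")
  case True
  then have "Suc (h - length (u @ [x])) = h - length u" by simp
  then show ?thesis using True u wu x snoc_in_tvert_iff by (simp add: subtree_vec_def)
next
  case False
  then show ?thesis using snoc_in_tvert_iff by (simp add: subtree_vec_def)
qed

lemma lap_comb_subtree_vec_inside:
  assumes d: "d \<ge> 1" and u: "u \<in> tvert d h" and wu: "prefix w u"
  shows "lap_comb d h (subtree_vec d h w) u =
      (if u = w then repunit (int d - 1) (Suc (Suc (h - length u))) else 0)
      - (if u = [] then repunit (int d - 1) (h - length u) else 0)"
proof -
  define k where "k = h - length u"
  let ?R = "repunit (int d - 1)"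
  have parent: "(if u = [] then 0 else subtree_vec d h w (butlast u))
      = (if u = w then 0 else ?R (Suc (Suc k)))"
    using subtree_vec_butlast[OF u wu] not_prefix_butlast[of u] wu
    by (auto simp: subtree_vec_def k_def)
  have self: "subtree_vec d h w u = ?R (Suc k)"
    using u wu by (simp add: subtree_vec_def k_def)
  have children: "(\<Sum>x<branching d u. subtree_vec d h w (u @ [x])) = int (branching d u) * ?R k"
    using subtree_vec_snoc[OF u wu] by (simp add: k_def)
  have lap: "lap_comb d h (subtree_vec d h w) u =
      int d * ?R (Suc k) - (if u = w then 0 else ?R (Suc (Suc k))) - int (branching d u) * ?R k"
    using lap_comb_eq[OF subtree_vec_in_ZV[of d h w] u] self parent children by simp
  have three: "int d * ?R (Suc k) = ?R (Suc (Suc k)) + (int d - 1) * ?R k"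
    using repunit_three_term[of "int d - 1" k] by simp
  show ?thesis
  proof (cases "u = []")
    case True
    then have "w = []" "int (branching d u) = int d" using wu by (auto simp: branching_def)
    then show ?thesis using lap three True unfolding k_def[symmetric] by (simp add: algebra_simps)
  next
    case False
    then have "int (branching d u) = int d - 1" using d by (simp add: branching_def of_nat_diff)
    then show ?thesis using lap three False unfolding k_def[symmetric] by simp
  qed
qed

lemma lap_comb_subtree_vec_outside:
  assumes w: "w \<in> tvert d h" and u: "u \<in> tvert d h" and wu: "\<not> prefix w u"
  shows "lap_comb d h (subtree_vec d h w) u =
      (if w \<noteq> [] \<and> u = butlast w then - repunit (int d - 1) (Suc (h - length w)) else 0)"
proof -
  let ?R = "repunit (int d - 1)"
  have self: "subtree_vec d h w u = 0" using wu by (simp add: subtree_vec_def)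
  have parent: "(if u = [] then 0 else subtree_vec d h w (butlast u)) = 0"
    using wu prefix_order.trans[OF _ prefixeq_butlast[of u]] by (auto simp: subtree_vec_def)
  have "(\<Sum>x<branching d u. subtree_vec d h w (u @ [x]))
      = (\<Sum>x<branching d u. if u @ [x] = w then ?R (Suc (h - length w)) else 0)"
    using w wu by (intro sum.cong) (auto simp: subtree_vec_def)
  also have "\<dots> = (if w \<noteq> [] \<and> u = butlast w then ?R (Suc (h - length w)) else 0)"
  proof (cases "w \<noteq> [] \<and> u = butlast w")
    case True
    then have w_eq: "w = u @ [last w]" by simp
    then have "last w < branching d u" using w snoc_in_tvert_iff by metis
    moreover have "u @ [x] = w \<longleftrightarrow> x = last w" for x by (subst w_eq) simp
    ultimately show ?thesis using True by simp
  next
    case False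
    then have "u @ [x] \<noteq> w" for x by auto
    then show ?thesis using False by auto
  qed
  finally show ?thesis using lap_comb_eq[OF subtree_vec_in_ZV[of d h w] u] self parent by simp
qed

lemma lap_comb_subtree_vec_Nil:
  assumes "d \<ge> 1"
  shows "lap_comb d h (subtree_vec d h []) = (\<lambda>u. if u = [] then int d * (int d - 1) ^ h else 0)"
proof
  fix u
  show "lap_comb d h (subtree_vec d h []) u = (if u = [] then int d * (int d - 1) ^ h else 0)"
  proof (cases "u \<in> tvert d h")
    case True
    then show ?thesis
      using lap_comb_subtree_vec_inside[OF assms True, of "[]"] repunit_Suc_Suc_diff[of "int d - 1" h]
      by simp
  next
    case False
    then show ?thesis using Nil_in_tvert[of d h] by (auto simp: lap_comb_outside)
  qed
qed

lemma lap_comb_subtree_vec: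
  assumes d: "d \<ge> 1" and w: "w \<in> tvert d h" "w \<noteq> []"
  shows "lap_comb d h (subtree_vec d h w) = (\<lambda>u.
      if u = w then repunit (int d - 1) (Suc (Suc (h - length w)))
      else if u = butlast w then - repunit (int d - 1) (Suc (h - length w)) else 0)"
proof
  fix u
  have not_butlast: "\<not> prefix w (butlast w)" using w(2) by (rule not_prefix_butlast)
  consider (inside) "u \<in> tvert d h" "prefix w u" | (outside) "u \<in> tvert d h" "\<not> prefix w u"
    | (off) "u \<notin> tvert d h" by blast
  then show "lap_comb d h (subtree_vec d h w) u =
      (if u = w then repunit (int d - 1) (Suc (Suc (h - length w)))
       else if u = butlast w then - repunit (int d - 1) (Suc (h - length w)) else 0)"
  proof cases
    case inside
    then have "u \<noteq> butlast w" "u \<noteq> []" using not_butlast w(2) by auto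
    then show ?thesis
      using lap_comb_subtree_vec_inside[OF d inside] by simp
  next
    case outside
    then have "u \<noteq> w" by auto
    then show ?thesis
      using lap_comb_subtree_vec_outside[OF w(1) outside] w(2) by simp
  next
    case off
    then have "u \<noteq> w" "u \<noteq> butlast w" using w(1) butlast_in_tvert by auto
    then show ?thesis using off by (simp add: lap_comb_outside)
  qed
qed

lemma lap_lattice_add:
  assumes "f \<in> lap_lattice d h" "g \<in> lap_lattice d h"
  shows "(\<lambda>w. f w + g w) \<in> lap_lattice d h"
proof -
  obtain c c' where "f = lap_comb d h c" "g = lap_comb d h c'"
    using assms unfolding lap_lattice_eq_range by auto
  then have "(\<lambda>w. f w + g w) = lap_comb d h (\<lambda>v. c v + c' v)"
    by (auto simp: lap_comb_def algebra_simps sum.distrib)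
  then show ?thesis unfolding lap_lattice_eq_range by simp
qed

lemma lap_lattice_scale:
  assumes "f \<in> lap_lattice d h"
  shows "(\<lambda>w. a * f w) \<in> lap_lattice d h"
proof -
  obtain c where "f = lap_comb d h c"
    using assms unfolding lap_lattice_eq_range by auto
  then have "(\<lambda>w. a * f w) = lap_comb d h (\<lambda>v. a * c v)"
    by (auto simp: lap_comb_def sum_distrib_left mult.assoc)
  then show ?thesis unfolding lap_lattice_eq_range by simp
qed

lemma lap_lattice_zero: "(\<lambda>_. 0) \<in> lap_lattice d h"
proof -
  have "(\<lambda>_. 0) = lap_comb d h (\<lambda>_. 0)" by (simp add: lap_comb_def)
  then show ?thesis unfolding lap_lattice_eq_range by simp
qed

lemma lap_lattice_sum:
  assumes "finite A" "\<And>u. u \<in> A \<Longrightarrow> f u \<in> lap_lattice d h"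
  shows "(\<lambda>w. \<Sum>u\<in>A. f u w) \<in> lap_lattice d h"
  using assms by (induction A rule: finite_induct) (simp_all add: lap_lattice_zero lap_lattice_add)

definition point_vec :: "nat list \<Rightarrow> int \<Rightarrow> nat list \<Rightarrow> int" where
  "point_vec u n = (\<lambda>v. if v = u then n else 0)"

lemma point_vec_mult_in_lap_lattice:
  assumes "point_vec u n \<in> lap_lattice d h"
  shows "point_vec u (a * n) \<in> lap_lattice d h"
proof -
  have "point_vec u (a * n) = (\<lambda>w. a * point_vec u n w)" by (auto simp: point_vec_def)
  then show ?thesis using lap_lattice_scale[OF assms] by simp
qed

lemma point_vec_Nil_in_lap_lattice:
  "d \<ge> 1 \<Longrightarrow> point_vec [] (int d * (int d - 1) ^ h) \<in> lap_lattice d h"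
  using lap_comb_subtree_vec_Nil unfolding lap_lattice_eq_range point_vec_def by (metis rangeI)

lemma point_vec_snoc_in_lap_lattice:
  assumes d: "d \<ge> 1" and w: "w \<in> tvert d h" "w \<noteq> []"
    and parent: "point_vec (butlast w) (c * repunit (int d - 1) (Suc (h - length w))) \<in> lap_lattice d h"
  shows "point_vec w (c * repunit (int d - 1) (Suc (Suc (h - length w)))) \<in> lap_lattice d h"
proof -
  have "w \<noteq> butlast w" using w(2) by (cases w rule: rev_cases) auto
  then have "point_vec w (c * repunit (int d - 1) (Suc (Suc (h - length w)))) =
      (\<lambda>u. c * lap_comb d h (subtree_vec d h w) u
        + point_vec (butlast w) (c * repunit (int d - 1) (Suc (h - length w))) u)"
    by (auto simp: lap_comb_subtree_vec[OF d w] point_vec_def)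
  moreover have "lap_comb d h (subtree_vec d h w) \<in> lap_lattice d h"
    unfolding lap_lattice_eq_range by simp
  ultimately show ?thesis using lap_lattice_add[OF lap_lattice_scale parent] by simp
qed

lemma point_vec_in_lap_lattice:
  fixes N n :: int
  assumes d: "d \<ge> 1"
    and root: "int d * (int d - 1) ^ h * repunit (int d - 1) (Suc h) dvd N"
    and repunit_dvd: "\<And>m. 2 \<le> m \<Longrightarrow> m \<le> Suc h \<Longrightarrow> repunit (int d - 1) m dvd N"
    and u: "u \<in> tvert d h" "u \<noteq> []"
    and "N dvd n * repunit (int d - 1) (Suc (h - length u))"
    and "repunit (int d - 1) (Suc (Suc (h - length u))) dvd n"
  shows "point_vec u n \<in> lap_lattice d h"
  using u assms(6,7)
proof (induction u arbitrary: n rule: rev_induct)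
  case Nil
  then show ?case by simp
next
  case (snoc x v)
  let ?R = "repunit (int d - 1)"
  define k where "k = h - length (v @ [x])"
  have k: "h - length v = Suc k" using length_le_if_in_tvert[OF snoc.prems(1)] by (simp add: k_def)
  obtain c where n: "n = ?R (Suc (Suc k)) * c"
    using snoc.prems(4) by (auto simp: k_def elim: dvdE)
  have N_dvd: "N dvd ?R (Suc (Suc k)) * (c * ?R (Suc k))"
    using snoc.prems(3) by (simp add: n k_def mult_ac)
  have "point_vec v (c * ?R (Suc k)) \<in> lap_lattice d h"
  proof (cases "v = []")
    case True
    then have "h = Suc k" using k by simp
    have "int d * (int d - 1) ^ h * ?R (Suc h) dvd (c * ?R (Suc k)) * ?R (Suc h)"
      using dvd_trans[OF root N_dvd] \<open>h = Suc k\<close> by (simp add: mult_ac)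
    moreover have "?R (Suc h) \<noteq> 0"
      using repunit_pos[of "int d - 1" "Suc h"] d by simp
    ultimately have "int d * (int d - 1) ^ h dvd c * ?R (Suc k)" by simp
    then show ?thesis
      using point_vec_mult_in_lap_lattice[OF point_vec_Nil_in_lap_lattice[OF d]] True
      by (auto elim!: dvdE simp: mult.commute)
  next
    case False
    have v: "v \<in> tvert d h" using snoc.prems(1) butlast_in_tvert by fastforce
    have "length v \<ge> 1" using False by (cases v) auto
    then have "?R (Suc (Suc (Suc k))) dvd N" using k by (intro repunit_dvd) auto
    then have "?R (Suc (Suc (Suc k))) dvd ?R (Suc (Suc k)) * (c * ?R (Suc k))"
      using N_dvd by (rule dvd_trans)
    then have "?R (Suc (Suc (Suc k))) dvd c * ?R (Suc k)"
      by (simp add: coprime_dvd_mult_right_iff[OF coprime_repunit_Suc])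
    then show ?thesis using snoc.IH[OF v False] N_dvd k by (simp add: mult_ac)
  qed
  then show ?case
    using point_vec_snoc_in_lap_lattice[OF d snoc.prems(1)] n by (simp add: k_def mult.commute)
qed

lemma elem_order_dvd:
  assumes M: "M > 0" and "(\<lambda>w. int M * f w) \<in> lap_lattice d h"
  shows "elem_order d h f dvd M"
proof -
  let ?P = "\<lambda>k. k > 0 \<and> (\<lambda>w. int k * f w) \<in> lap_lattice d h"
  define k where "k = (LEAST k. ?P k)"
  have ex: "\<exists>k. ?P k" using assms by blast
  have order: "elem_order d h f = k" using ex by (simp add: elem_order_def k_def)
  have k: "?P k" unfolding k_def using ex by (rule LeastI_ex)
  have mod_eq: "(\<lambda>w. int (M mod k) * f w) =
      (\<lambda>w. - int (M div k) * (int k * f w) + int M * f w)"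
  proof
    fix w
    have "int M = int (M div k) * int k + int (M mod k)"
      by (metis div_mult_mod_eq of_nat_add of_nat_mult)
    then show "int (M mod k) * f w = - int (M div k) * (int k * f w) + int M * f w"
      by (simp add: algebra_simps)
  qed
  have "(\<lambda>w. int (M mod k) * f w) \<in> lap_lattice d h"
    unfolding mod_eq by (rule lap_lattice_add[OF lap_lattice_scale[OF conjunct2[OF k]] assms(2)])
  moreover have "M mod k < k" using k by simp
  ultimately have "M mod k = 0" using not_less_Least[of "M mod k" ?P] unfolding k_def by auto
  then show ?thesis using order by auto
qed

lemma group_exponent_dvd:
  assumes "M > 0" and "\<And>u. u \<in> tvert d h \<Longrightarrow> point_vec u (int M) \<in> lap_lattice d h"
  shows "group_exponent d h dvd M"
  unfolding group_exponent_def
proof (rule Lcm_least, clarify)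
  fix f assume f: "f \<in> ZV d h"
  have "(\<Sum>u\<in>tvert d h. f u * point_vec u (int M) w) = int M * f w" for w
  proof -
    have "(\<Sum>u\<in>tvert d h. f u * point_vec u (int M) w)
        = (\<Sum>u\<in>tvert d h. if w = u then f u * int M else 0)"
      by (intro sum.cong) (auto simp: point_vec_def)
    also have "\<dots> = int M * f w" using f finite_tvert[of d h] by (auto simp: ZV_def)
    finally show ?thesis .
  qed
  then have "(\<lambda>w. int M * f w) = (\<lambda>w. \<Sum>u\<in>tvert d h. f u * point_vec u (int M) w)"
    by simp
  also have "\<dots> \<in> lap_lattice d h"
    using assms(2) by (intro lap_lattice_sum lap_lattice_scale finite_tvert)
  finally show "elem_order d h f dvd M" by (rule elem_order_dvd[OF assms(1)])
qed

lemma group_exponent_dvd_repunit: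
  assumes d: "d \<ge> 1" and "N > 0"
    and root: "int d * (int d - 1) ^ h * repunit (int d - 1) (Suc h) dvd int N"
    and repunit_dvd: "\<And>m. 2 \<le> m \<Longrightarrow> m \<le> Suc h \<Longrightarrow> repunit (int d - 1) m dvd int N"
  shows "group_exponent d h dvd N"
proof (rule group_exponent_dvd)
  fix u assume u: "u \<in> tvert d h"
  show "point_vec u (int N) \<in> lap_lattice d h"
  proof (cases "u = []")
    case True
    have "int d * (int d - 1) ^ h dvd int N" using root by (rule dvd_mult_left)
    then show ?thesis using point_vec_mult_in_lap_lattice[OF point_vec_Nil_in_lap_lattice[OF d]] True
      by (auto elim: dvdE simp: mult.commute)
  next
    case False
    then have "length u \<ge> 1" "length u \<le> h" using length_le_if_in_tvert[OF u] by (cases u; simp)+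
    then have "repunit (int d - 1) (Suc (Suc (h - length u))) dvd int N"
      by (intro repunit_dvd) auto
    then show ?thesis by (intro point_vec_in_lap_lattice[OF d root repunit_dvd u False]) simp_all
  qed
qed (use assms in simp)

theorem proposition7p5:
  fixes d h :: nat
  assumes "d \<ge> 3" and "h \<ge> 1"
  shows "group_exponent d h dvd
           (d - 1) ^ h * Lcm ({d * theta d (h + 1)} \<union> theta d ` {2..h})"
proof -
  let ?R = "repunit (int d - 1)"
  define L where "L = Lcm ({d * theta d (h + 1)} \<union> theta d ` {2..h})"
  have theta: "int (theta d m) = ?R m" for m
    using assms(1) by (rule theta_eq_repunit)
  have theta_pos: "theta d m > 0" if "m > 0" for m
    using repunit_pos[OF _ that, of "int d - 1"] assms(1) theta[of m] by simp
  then have "d * theta d (h + 1) \<noteq> 0" "\<forall>m\<in>{2..h}. theta d m \<noteq> 0"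
    using assms(1) by auto
  then have "0 \<notin> {d * theta d (h + 1)} \<union> theta d ` {2..h}" by (metis UnE imageE singletonD)
  then have "L \<noteq> 0" unfolding L_def by (subst Lcm_0_iff) auto
  have root: "int d * ?R (Suc h) dvd int L"
    unfolding L_def theta[symmetric] by (simp flip: of_nat_mult add: dvd_Lcm)
  have "?R m dvd int L" if "2 \<le> m" "m \<le> Suc h" for m
  proof (cases "m = Suc h")
    case True
    then show ?thesis using root by (simp add: dvd_mult_right)
  next
    case False
    then show ?thesis using that unfolding L_def theta[symmetric] by (simp add: dvd_Lcm)
  qed
  moreover have "int ((d - 1) ^ h * L) = (int d - 1) ^ h * int L"
    using assms(1) by (simp add: of_nat_diff)
  ultimately have "group_exponent d h dvd (d - 1) ^ h * L"
    using assms(1) \<open>L \<noteq> 0\<close> root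
    by (intro group_exponent_dvd_repunit) (auto simp: mult_ac intro: mult_dvd_mono dvd_mult)
  then show ?thesis unfolding L_def .
qed

end
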